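(* Let $p$ be a prime and let $n,\alpha$ be positive integers with $n<p^\alpha$. Let $$J=\{\,j\in\mathbb{Z}:\ 1\le j<p^\alpha,\ p^\alpha-n\in\operatorname{cous}(p^\alpha-j)\,\}.$$ For $j\in J$ write $j-1=\sum_{i=0}^{\alpha-1}j_ip^i$ with $0\le j_i<p$. Then $$n=\sum_{j\in J}\ \prod_{i=0}^{\alpha-1}(j_i+1).$$
   Context: For a positive integer $m$ with base-$p$ expansion $m=m_kp^k+m_{k-1}p^{k-1}+\dots+m_0$ ($0\le m_i<p$, $m_k\ne0$), the set of cousins of $m$ is $\operatorname{cous}(m)=\{m_kp^k+\epsilon_{k-1}m_{k-1}p^{k-1}+\dots+\epsilon_0m_0:\ \epsilon_i\in\{1,-1\}\}$. *)

theory Defs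
  imports "HOL-Computational_Algebra.Primes"
begin

text \<open>Index of the leading base-p digit of m (for p >= 2, m >= 1): the largest k with p^k <= m.\<close>
definition topdeg :: "nat \<Rightarrow> nat \<Rightarrow> nat" where
  "topdeg p m = (GREATEST k. p ^ k \<le> m)"

definition digit :: "nat \<Rightarrow> nat \<Rightarrow> nat \<Rightarrow> nat" where
  "digit p m i = m div p ^ i mod p"

definition cous :: "nat \<Rightarrow> nat \<Rightarrow> int set" where
  "cous p m = {x. \<exists>\<epsilon>::nat \<Rightarrow> int. (\<forall>i. \<epsilon> i \<in> {1, -1}) \<and>
      x = int (digit p m (topdeg p m)) * int p ^ topdeg p m
          + (\<Sum>i<topdeg p m. \<epsilon> i * int (digit p m i) * int p ^ i)}"

end

theory Submission
  imports Defs
begin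

text \<open>
  Put \<open>m = p\<^sup>\<alpha> - j\<close>. The base-\<open>p\<close> digits of \<open>j - 1 = p\<^sup>\<alpha> - 1 - m\<close> are \<open>p - 1 - m\<^sub>i\<close>,
  so the summand is the weight \<open>w(m) = \<Prod>(p - m\<^sub>i)\<close>. A positive integer is a cousin of \<open>m\<close>
  exactly when it is a signed digit sum \<open>\<Sum> \<pm>m\<^sub>i p\<^sup>i\<close>, since a negative leading sign would make
  the sum negative. Hence the right-hand side is \<open>F\<^sub>\<alpha>(p\<^sup>\<alpha> - n)\<close>, where \<open>F\<^sub>a(t)\<close> is the total
  weight of those \<open>m < p\<^sup>a\<close> having \<open>t\<close> as a signed digit sum. Splitting off the last digit gives
  \<open>F\<^sub>a\<^sub>+\<^sub>1(pq + r) = (p - r) F\<^sub>a(q) + r F\<^sub>a(q + 1)\<close> for \<open>0 \<le> r < p\<close>; the two ways of writing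
  \<open>pq + r\<close> as \<open>\<pm>m\<^sub>0 + p y\<close> never count the same \<open>m\<close> twice, because all signed digit sums of
  a fixed \<open>m\<close> have the same parity. The tent function \<open>max 0 (p\<^sup>a - \<bar>t\<bar>)\<close> satisfies the same
  recurrence, so \<open>F\<^sub>\<alpha>(p\<^sup>\<alpha> - n) = n\<close>.
\<close>

definition signed_digit_sums :: "nat \<Rightarrow> nat \<Rightarrow> nat \<Rightarrow> int set" where
  "signed_digit_sums p a m = {x. \<exists>\<epsilon>::nat \<Rightarrow> int. (\<forall>i. \<epsilon> i \<in> {1, -1}) \<and>
      x = (\<Sum>i<a. \<epsilon> i * int (digit p m i) * int p ^ i)}"

lemma digit_0: "digit p m 0 = m mod p"
  by (simp add: digit_def)

lemma digit_Suc: "digit p m (Suc i) = digit p (m div p) i"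
  by (simp add: digit_def div_mult2_eq)

lemma digit_less: "0 < p \<Longrightarrow> digit p m i < p"
  by (simp add: digit_def)

lemma signed_digit_sums_0 [simp]: "signed_digit_sums p 0 m = {0}"
  by (auto simp: signed_digit_sums_def)

lemma signed_digit_sums_of_zero: "signed_digit_sums p a 0 = {0}"
  by (auto simp: signed_digit_sums_def digit_def)

lemma signed_digit_sums_Suc:
  "t \<in> signed_digit_sums p (Suc a) m \<longleftrightarrow>
     (\<exists>e\<in>{1, -1}. \<exists>y\<in>signed_digit_sums p a (m div p). t = e * int (m mod p) + int p * y)"
proof
  assume "t \<in> signed_digit_sums p (Suc a) m"
  then obtain \<epsilon> where \<epsilon>: "\<forall>i. \<epsilon> i \<in> {1, -1}"
    and t: "t = (\<Sum>i<Suc a. \<epsilon> i * int (digit p m i) * int p ^ i)"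
    unfolding signed_digit_sums_def by blast
  let ?y = "\<Sum>i<a. \<epsilon> (Suc i) * int (digit p (m div p) i) * int p ^ i"
  have "t = \<epsilon> 0 * int (m mod p) + int p * ?y"
    unfolding t sum.lessThan_Suc_shift digit_0 digit_Suc by (simp add: sum_distrib_left mult_ac)
  moreover have "?y \<in> signed_digit_sums p a (m div p)"
    unfolding signed_digit_sums_def using \<epsilon> by (intro CollectI exI[of _ "\<lambda>i. \<epsilon> (Suc i)"]) simp
  ultimately show "\<exists>e\<in>{1, -1}. \<exists>y\<in>signed_digit_sums p a (m div p). t = e * int (m mod p) + int p * y"
    using \<epsilon> by blast
next
  assume "\<exists>e\<in>{1, -1}. \<exists>y\<in>signed_digit_sums p a (m div p). t = e * int (m mod p) + int p * y"
  then obtain e y \<epsilon> where e: "e \<in> {1, -1}" and \<epsilon>: "\<forall>i. \<epsilon> i \<in> {1, -1}"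
    and t: "t = e * int (m mod p) + int p * y"
    and y: "y = (\<Sum>i<a. \<epsilon> i * int (digit p (m div p) i) * int p ^ i)"
    unfolding signed_digit_sums_def by blast
  have "\<forall>i. case_nat e \<epsilon> i \<in> {1, -1}"
    using e \<epsilon> by (simp split: nat.split)
  moreover have "t = (\<Sum>i<Suc a. case_nat e \<epsilon> i * int (digit p m i) * int p ^ i)"
    unfolding t y sum.lessThan_Suc_shift digit_0 digit_Suc by (simp add: sum_distrib_left mult_ac)
  ultimately show "t \<in> signed_digit_sums p (Suc a) m"
    unfolding signed_digit_sums_def by blast
qed

lemma signed_digit_sum_parity:
  assumes "x \<in> signed_digit_sums p a m"
  shows "even (x - (\<Sum>i<a. int (digit p m i) * int p ^ i))"
proof -
  obtain \<epsilon> where \<epsilon>: "\<forall>i. \<epsilon> i \<in> {1, -1}"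
    and x: "x = (\<Sum>i<a. \<epsilon> i * int (digit p m i) * int p ^ i)"
    using assms unfolding signed_digit_sums_def by blast
  have "x - (\<Sum>i<a. int (digit p m i) * int p ^ i) = (\<Sum>i<a. (\<epsilon> i - 1) * int (digit p m i) * int p ^ i)"
    unfolding x sum_subtractf[symmetric] by (simp add: algebra_simps)
  moreover have "even (\<epsilon> i - 1)" for i
    using \<epsilon>[rule_format, of i] by auto
  ultimately show ?thesis
    by (simp add: dvd_sum)
qed

lemma signed_digit_sums_not_consecutive:
  assumes "q \<in> signed_digit_sums p a m"
  shows "q + 1 \<notin> signed_digit_sums p a m"
proof
  assume "q + 1 \<in> signed_digit_sums p a m"
  with assms show False
    using signed_digit_sum_parity[of q p a m] signed_digit_sum_parity[of "q + 1" p a m] by presburger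
qed

lemma mult_add_eq_mult_add_iff:
  fixes p q q' r r' :: int
  assumes "0 \<le> r" "r < p" "0 \<le> r'" "r' < p"
  shows "p * q + r = p * q' + r' \<longleftrightarrow> q = q' \<and> r = r'"
proof
  assume eq: "p * q + r = p * q' + r'"
  have "(r + p * q) div p = (r' + p * q') div p" "(r + p * q) mod p = (r' + p * q') mod p"
    using eq by (simp_all add: add.commute)
  then show "q = q' \<and> r = r'"
    using assms by simp
qed simp

lemma signed_digit_sums_Suc_residue:
  assumes "r < p"
  shows "int p * q + int r \<in> signed_digit_sums p (Suc a) m \<longleftrightarrow>
     (m mod p = r \<and> q \<in> signed_digit_sums p a (m div p)) \<or>
     (0 < r \<and> m mod p = p - r \<and> q + 1 \<in> signed_digit_sums p a (m div p))"
    (is "?t \<in> _ \<longleftrightarrow> ?low \<or> ?high")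
proof -
  let ?Y = "signed_digit_sums p a (m div p)"
  have m0: "m mod p < p"
    using assms by simp
  have unique: "int p * q + int r = int p * y + c \<longleftrightarrow> q = y \<and> int r = c" if "0 \<le> c" "c < int p" for y c
    using mult_add_eq_mult_add_iff[of "int r" "int p" c] that assms by simp
  show ?thesis
  proof
    assume "?t \<in> signed_digit_sums p (Suc a) m"
    then obtain e y where e: "e \<in> {1, -1}" and y: "y \<in> ?Y" and t: "?t = e * int (m mod p) + int p * y"
      unfolding signed_digit_sums_Suc by blast
    consider "e = 1" | "e = -1" "m mod p = 0" | "e = -1" "0 < m mod p"
      using e by blast
    then show "?low \<or> ?high"
    proof cases
      case 1
      then show ?thesis using t y unique[of "int (m mod p)" y] m0 by (simp add: add.commute)
    next
      case 2
      then show ?thesis using t y unique[of 0 y] m0 by simp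
    next
      case 3
      have "?t = int p * (y - 1) + (int p - int (m mod p))"
        using t 3 by (simp add: algebra_simps)
      then have "q = y - 1" "int r = int p - int (m mod p)"
        using unique[of "int p - int (m mod p)" "y - 1"] 3 m0 by auto
      then have "q + 1 = y" "m mod p = p - r" "0 < r"
        using m0 by linarith+
      then show ?thesis using y by auto
    qed
  next
    assume "?low \<or> ?high"
    then have "\<exists>e\<in>{1, -1}. \<exists>y\<in>?Y. ?t = e * int (m mod p) + int p * y"
    proof
      assume ?low
      then show ?thesis by (intro bexI[of _ 1] bexI[of _ q]) auto
    next
      assume ?high
      then show ?thesis using assms
        by (intro bexI[of _ "-1"] bexI[of _ "q + 1"]) (auto simp: algebra_simps)
    qed
    then show "?t \<in> signed_digit_sums p (Suc a) m"
      unfolding signed_digit_sums_Suc .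
  qed
qed

definition digit_weight :: "nat \<Rightarrow> nat \<Rightarrow> nat \<Rightarrow> nat" where
  "digit_weight p a m = (\<Prod>i<a. p - digit p m i)"

definition weighted_count :: "nat \<Rightarrow> nat \<Rightarrow> int \<Rightarrow> int" where
  "weighted_count p a t =
     (\<Sum>m<p ^ a. if t \<in> signed_digit_sums p a m then int (digit_weight p a m) else 0)"

lemma digit_weight_Suc: "digit_weight p (Suc a) m = (p - m mod p) * digit_weight p a (m div p)"
  unfolding digit_weight_def prod.lessThan_Suc_shift by (simp add: digit_0 digit_Suc)

lemma sum_lessThan_mult:
  fixes f :: "nat \<Rightarrow> 'a::comm_monoid_add"
  shows "(\<Sum>m<p * P. f m) = (\<Sum>m0<p. \<Sum>m'<P. f (m0 + p * m'))"
proof -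
  have block: "(\<Sum>m\<in>{m' * p..<m' * p + p}. f m) = (\<Sum>m0<p. f (m0 + p * m'))" for m'
    using sum.shift_bounds_nat_ivl[of f 0 "m' * p" p]
    by (simp add: atLeast0LessThan add.commute mult.commute)
  have "(\<Sum>m<p * P. f m) = (\<Sum>m'<P. \<Sum>m0<p. f (m0 + p * m'))"
    using sum.nat_group[of f p P] by (simp add: block mult.commute)
  then show ?thesis by (simp add: sum.swap[of _ "{..<P}"])
qed

lemma weighted_count_Suc:
  assumes r: "r < p"
  shows "weighted_count p (Suc a) (int p * q + int r) =
    int (p - r) * weighted_count p a q + int r * weighted_count p a (q + 1)"
proof -
  let ?S = "signed_digit_sums p a" and ?w = "digit_weight p a" and ?F = "weighted_count p a"
  let ?term = "\<lambda>m. if int p * q + int r \<in> signed_digit_sums p (Suc a) m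
                   then int (digit_weight p (Suc a) m) else 0"
  have digit_block: "(\<Sum>m'<p ^ a. ?term (m0 + p * m')) =
      int (p - m0) * ((if m0 = r then ?F q else 0) + (if 0 < r \<and> m0 = p - r then ?F (q + 1) else 0))"
    if m0: "m0 < p" for m0
  proof -
    have "?term (m0 + p * m') = int (p - m0) *
        ((if m0 = r \<and> q \<in> ?S m' then int (?w m') else 0) +
         (if 0 < r \<and> m0 = p - r \<and> q + 1 \<in> ?S m' then int (?w m') else 0))" for m'
      using signed_digit_sums_Suc_residue[OF r, of q a "m0 + p * m'"] m0
        signed_digit_sums_not_consecutive[of q p a m']
      by (auto simp: digit_weight_Suc)
    then show ?thesis
      by (simp add: weighted_count_def sum.distrib sum_distrib_left[symmetric])
  qed
  have "weighted_count p (Suc a) (int p * q + int r) = (\<Sum>m0<p. \<Sum>m'<p ^ a. ?term (m0 + p * m'))"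
    unfolding weighted_count_def power_Suc by (rule sum_lessThan_mult)
  also have "\<dots> = (\<Sum>m0<p. int (p - m0) * (if m0 = r then ?F q else 0)) +
                  (\<Sum>m0<p. int (p - m0) * (if 0 < r \<and> m0 = p - r then ?F (q + 1) else 0))"
    by (simp add: digit_block sum.distrib distrib_left)
  also have "\<dots> = int (p - r) * ?F q + int r * ?F (q + 1)"
    using r by (cases "r = 0") (simp_all add: if_distrib[of "\<lambda>x. _ * x"] cong: if_cong)
  finally show ?thesis .
qed

lemma tent_mult_add:
  fixes p P q r :: int
  assumes "0 \<le> r" "r < p" "0 < P"
  shows "(p - r) * max 0 (P - \<bar>q\<bar>) + r * max 0 (P - \<bar>q + 1\<bar>) = max 0 (p * P - \<bar>p * q + r\<bar>)"
proof -
  consider "P \<le> q" | "0 \<le> q" "q < P" | "- P \<le> q" "q < 0" | "q < - P"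
    by linarith
  then show ?thesis
  proof cases
    case 1
    then have "p * P \<le> p * q" "0 < p * P"
      using assms by (auto intro: mult_left_mono)
    then have "max 0 (p * P - \<bar>p * q + r\<bar>) = 0"
      using assms by linarith
    then show ?thesis
      using 1 by simp
  next
    case 2
    then have "0 \<le> p * q" "p * (q + 1) \<le> p * P"
      using assms by (auto intro: mult_left_mono)
    then show ?thesis
      using 2 assms by (simp add: algebra_simps)
  next
    case 3
    then have "p * q \<le> - p" "- (p * P) \<le> p * q"
      using assms mult_left_mono[of q "-1" p] mult_left_mono[of "-P" q p] by auto
    then show ?thesis
      using 3 assms by (simp add: algebra_simps)
  next
    case 4
    then have "p * (q + 1) \<le> - (p * P)"
      using assms mult_left_mono[of "q + 1" "-P" p] by simp
    then show ?thesis
      using 4 assms by (simp add: algebra_simps)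
  qed
qed

lemma weighted_count_eq:
  assumes p: "0 < p"
  shows "weighted_count p a t = max 0 (int p ^ a - \<bar>t\<bar>)"
proof (induction a arbitrary: t)
  case 0
  have "weighted_count p 0 t = (if t = 0 then 1 else 0)"
    by (simp add: weighted_count_def digit_weight_def)
  then show ?case
    by simp
next
  case (Suc a)
  define q where "q = t div int p"
  define r where "r = nat (t mod int p)"
  have r: "r < p" and t: "t = int p * q + int r"
    using p by (simp_all add: q_def r_def nat_less_iff)
  have "weighted_count p (Suc a) t = int (p - r) * weighted_count p a q + int r * weighted_count p a (q + 1)"
    unfolding t by (rule weighted_count_Suc[OF r])
  also have "\<dots> = max 0 (int p * int p ^ a - \<bar>int p * q + int r\<bar>)"
    unfolding Suc.IH using r p by (simp add: tent_mult_add)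
  finally show ?case
    unfolding t by simp
qed

lemma topdeg_bounds:
  assumes p: "2 \<le> p" and m: "0 < m"
  shows "p ^ topdeg p m \<le> m" "m < p ^ Suc (topdeg p m)"
proof -
  have bounded: "k \<le> m" if "p ^ k \<le> m" for k
  proof -
    have "k < 2 ^ k" by (rule less_exp)
    also have "\<dots> \<le> p ^ k" using p by (simp add: power_mono)
    finally show ?thesis using that by simp
  qed
  have "p ^ 0 \<le> m" using m by simp
  then show "p ^ topdeg p m \<le> m"
    unfolding topdeg_def by (rule GreatestI_nat[of "\<lambda>k. p ^ k \<le> m"]) (rule bounded)
  show "m < p ^ Suc (topdeg p m)"
  proof (rule ccontr)
    assume "\<not> m < p ^ Suc (topdeg p m)"
    then have "Suc (topdeg p m) \<le> topdeg p m"
      unfolding topdeg_def by (intro Greatest_le_nat[of "\<lambda>k. p ^ k \<le> m" _ m]) (auto intro: bounded)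
    then show False by simp
  qed
qed

lemma digit_topdeg_pos:
  assumes "2 \<le> p" "0 < m"
  shows "0 < digit p m (topdeg p m)"
proof -
  have "p ^ topdeg p m div p ^ topdeg p m \<le> m div p ^ topdeg p m"
    using topdeg_bounds(1)[OF assms] by (rule div_le_mono)
  moreover have "m div p ^ topdeg p m < p"
    using topdeg_bounds(2)[OF assms] by (simp add: less_mult_imp_div_less mult.commute)
  ultimately show ?thesis
    using assms by (simp add: digit_def)
qed

lemma digit_above_topdeg:
  assumes "2 \<le> p" "0 < m" "topdeg p m < i"
  shows "digit p m i = 0"
proof -
  have "m < p ^ i"
    using topdeg_bounds(2)[OF assms(1,2)] power_increasing[of "Suc (topdeg p m)" i p] assms
    by simp
  then show ?thesis
    by (simp add: digit_def)
qed

lemma abs_signed_digit_sum_less: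
  assumes p: "0 < p" and \<epsilon>: "\<forall>i. \<epsilon> i \<in> {1, -1::int}"
  shows "\<bar>\<Sum>i<k. \<epsilon> i * int (digit p m i) * int p ^ i\<bar> < int p ^ k"
proof (induction k)
  case 0
  then show ?case by simp
next
  case (Suc k)
  have "\<bar>\<epsilon> k * int (digit p m k) * int p ^ k\<bar> = int (digit p m k) * int p ^ k"
    using \<epsilon>[rule_format, of k] by (auto simp: abs_mult)
  also have "\<dots> \<le> (int p - 1) * int p ^ k"
    using digit_less[OF p, of m k] by (intro mult_right_mono) auto
  finally have "\<bar>\<Sum>i<Suc k. \<epsilon> i * int (digit p m i) * int p ^ i\<bar> < int p ^ k + (int p - 1) * int p ^ k"
    using Suc.IH abs_triangle_ineq by (simp add: order_le_less_trans[OF abs_triangle_ineq])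
  also have "\<dots> = int p ^ Suc k"
    by (simp add: algebra_simps)
  finally show ?case .
qed

lemma positive_cous_iff:
  assumes p: "2 \<le> p" and m: "0 < m" "m < p ^ a" and t: "0 < t"
  shows "t \<in> cous p m \<longleftrightarrow> t \<in> signed_digit_sums p a m"
proof -
  define k where "k = topdeg p m"
  let ?low = "\<lambda>\<epsilon>. \<Sum>i<k. \<epsilon> i * int (digit p m i) * int p ^ i"
  have "p ^ k < p ^ a"
    using topdeg_bounds(1)[OF p m(1)] m(2) unfolding k_def by linarith
  then have "k < a"
    using p by simp
  then have split: "(\<Sum>i<a. \<epsilon> i * int (digit p m i) * int p ^ i) =
      ?low \<epsilon> + \<epsilon> k * int (digit p m k) * int p ^ k" for \<epsilon> :: "nat \<Rightarrow> int"
    using sum.mono_neutral_right[of "{..<a}" "{..<Suc k}" "\<lambda>i. \<epsilon> i * int (digit p m i) * int p ^ i"]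
      digit_above_topdeg[OF p m(1)] unfolding k_def by auto
  have cous: "cous p m = {x. \<exists>\<epsilon>::nat \<Rightarrow> int. (\<forall>i. \<epsilon> i \<in> {1, -1}) \<and>
      x = int (digit p m k) * int p ^ k + ?low \<epsilon>}"
    unfolding cous_def k_def ..
  show ?thesis
  proof
    assume "t \<in> cous p m"
    then obtain \<epsilon> where \<epsilon>: "\<forall>i. \<epsilon> i \<in> {1, -1}" and t: "t = int (digit p m k) * int p ^ k + ?low \<epsilon>"
      unfolding cous by blast
    have "?low (\<epsilon>(k := 1)) = ?low \<epsilon>"
      by (rule sum.cong) auto
    then have "t = (\<Sum>i<a. (\<epsilon>(k := 1)) i * int (digit p m i) * int p ^ i)"
      unfolding split t by simp
    moreover have "\<forall>i. (\<epsilon>(k := 1)) i \<in> {1, -1}"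
      using \<epsilon> by simp
    ultimately show "t \<in> signed_digit_sums p a m"
      unfolding signed_digit_sums_def by blast
  next
    assume "t \<in> signed_digit_sums p a m"
    then obtain \<epsilon> where \<epsilon>: "\<forall>i. \<epsilon> i \<in> {1, -1}"
      and t: "t = ?low \<epsilon> + \<epsilon> k * int (digit p m k) * int p ^ k"
      unfolding signed_digit_sums_def split by blast
    have "\<bar>?low \<epsilon>\<bar> < int p ^ k"
      using abs_signed_digit_sum_less[of p \<epsilon>] p \<epsilon> by simp
    moreover have "1 * int p ^ k \<le> int (digit p m k) * int p ^ k"
      using digit_topdeg_pos[OF p m(1)] unfolding k_def by (intro mult_right_mono) auto
    ultimately have "\<epsilon> k = 1"
      using \<epsilon>[rule_format, of k] t \<open>0 < t\<close> by auto
    then show "t \<in> cous p m"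
      unfolding cous using \<epsilon> t by auto
  qed
qed

lemma digit_complement:
  assumes "m < p ^ a" "i < a"
  shows "digit p (p ^ a - 1 - m) i = p - 1 - digit p m i"
  using assms
proof (induction a arbitrary: m i)
  case 0
  then show ?case by simp
next
  case (Suc a)
  then have p: "0 < p"
    by (cases "p = 0") auto
  have high: "m div p < p ^ a"
    using Suc.prems(1) by (simp add: less_mult_imp_div_less mult.commute)
  have "p ^ Suc a - 1 - m = (p - 1 - m mod p) + p * (p ^ a - 1 - m div p)"
  proof -
    obtain r' where r': "p = m mod p + r' + 1"
      using mod_less_divisor[OF p, of m] less_imp_Suc_add by fastforce
    obtain d' where d': "p ^ a = m div p + d' + 1"
      using high less_imp_Suc_add by fastforce
    have digits: "p - 1 - m mod p = r'" "p ^ a - 1 - m div p = d'"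
      using r' d' by simp_all
    have "p ^ Suc a = p * (m div p) + p * d' + p"
      unfolding power_Suc d' by (simp add: algebra_simps)
    moreover have "m = m mod p + p * (m div p)"
      by simp
    ultimately show ?thesis
      unfolding digits using r' by linarith
  qed
  then have "(p ^ Suc a - 1 - m) mod p = p - 1 - m mod p"
    and "(p ^ Suc a - 1 - m) div p = p ^ a - 1 - m div p"
    using p by simp_all
  then show ?case
    using Suc.IH[OF high] Suc.prems(2) by (cases i) (simp_all add: digit_0 digit_Suc)
qed

lemma prod_complement_digits:
  assumes "0 < p" "m < p ^ a"
  shows "(\<Prod>i<a. digit p (p ^ a - m - 1) i + 1) = digit_weight p a m"
  using digit_complement[OF assms(2)] digit_less[OF assms(1), of m]
  by (auto simp: digit_weight_def diff_commute[of "p ^ a" m] Suc_diff_Suc intro!: prod.cong)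

lemma image_reflect_interval:
  fixes N :: nat
  shows "(\<lambda>m. N - m) ` {m. 0 < m \<and> m < N \<and> P m} = {j. 1 \<le> j \<and> j < N \<and> P (N - j)}"
proof (rule set_eqI)
  fix j
  show "j \<in> (\<lambda>m. N - m) ` {m. 0 < m \<and> m < N \<and> P m} \<longleftrightarrow> j \<in> {j. 1 \<le> j \<and> j < N \<and> P (N - j)}"
  proof
    assume "j \<in> {j. 1 \<le> j \<and> j < N \<and> P (N - j)}"
    then show "j \<in> (\<lambda>m. N - m) ` {m. 0 < m \<and> m < N \<and> P m}"
      by (intro image_eqI[of _ _ "N - j"]) auto
  qed auto
qed

lemma cousin_indices_eq_reflection:
  assumes p: "2 \<le> p" and t: "0 < t"
  shows "{j. 1 \<le> j \<and> j < p ^ a \<and> int t \<in> cous p (p ^ a - j)} =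
    (\<lambda>m. p ^ a - m) ` {m \<in> {..<p ^ a}. int t \<in> signed_digit_sums p a m}"
proof -
  have "m \<in> {..<p ^ a} \<and> int t \<in> signed_digit_sums p a m \<longleftrightarrow> 0 < m \<and> m < p ^ a \<and> int t \<in> cous p m" for m
  proof (cases "m = 0")
    case True
    then show ?thesis
      using t by (simp add: signed_digit_sums_of_zero)
  next
    case False
    then show ?thesis
      using positive_cous_iff[OF p, of m a "int t"] t by auto
  qed
  then show ?thesis
    by (simp add: image_reflect_interval)
qed

theorem mainTheorem10:
  fixes p n \<alpha> :: nat
  assumes "prime p" and "0 < n" and "0 < \<alpha>" and "n < p ^ \<alpha>"
  shows "n = (\<Sum>j\<in>{j. 1 \<le> j \<and> j < p ^ \<alpha> \<and> int (p ^ \<alpha> - n) \<in> cous p (p ^ \<alpha> - j)}.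
               \<Prod>i<\<alpha>. (digit p (j - 1) i + 1))"
proof -
  have p: "2 \<le> p"
    using assms(1) by (rule prime_ge_2_nat)
  let ?t = "p ^ \<alpha> - n"
  let ?M = "{m \<in> {..<p ^ \<alpha>}. int ?t \<in> signed_digit_sums p \<alpha> m}"
  have "inj_on (\<lambda>m. p ^ \<alpha> - m) ?M"
    by (rule inj_onI) auto
  have "(\<Sum>j\<in>{j. 1 \<le> j \<and> j < p ^ \<alpha> \<and> int ?t \<in> cous p (p ^ \<alpha> - j)}. \<Prod>i<\<alpha>. digit p (j - 1) i + 1) =
      (\<Sum>j\<in>(\<lambda>m. p ^ \<alpha> - m) ` ?M. \<Prod>i<\<alpha>. digit p (j - 1) i + 1)"
    using assms(4) by (simp only: cousin_indices_eq_reflection[OF p] zero_less_diff)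
  also have "\<dots> = (\<Sum>m\<in>?M. \<Prod>i<\<alpha>. digit p (p ^ \<alpha> - m - 1) i + 1)"
    using \<open>inj_on _ ?M\<close> by (rule sum.reindex[unfolded comp_def])
  also have "\<dots> = (\<Sum>m\<in>?M. digit_weight p \<alpha> m)"
    using p by (intro sum.cong refl prod_complement_digits) auto
  also have "int \<dots> = weighted_count p \<alpha> (int ?t)"
    unfolding weighted_count_def of_nat_sum by (rule sum.inter_filter) simp
  also have "\<dots> = int n"
    using weighted_count_eq[of p \<alpha>] p assms(4) by simp
  finally show ?thesis
    by (simp only: of_nat_eq_iff eq_commute)
qed

end
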